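(* Let $G$ be a finite group, with $H_1,\dots,H_n$ a full set of representatives of conjugacy classes of subgroups. Then $$\mathrm{lcm}_{1\le i\le n}\ \mathcal{K}_{G/\{e\}}\big(G/H_i\big)\quad\text{divides}\quad \mathrm{lcm}_{(H_i,V)}\ \mathcal{K}_{(G/\{e\},\mathbf 1)}\big((G/H_i,V)\big),$$ where the left side is computed in the Burnside ring $\Omega(G)$ and the right side in the global representation ring $R(G,e)$, the lcm on the right running over all $i$ and all irreducible representations $V$ of $H_i$ (up to $N_G(H_i)$-conjugation). That is, the Knutson Index of the Burnside ring with respect to the generating set of rows of the table of marks divides the Knutson Index of the global representation ring with respect to the generating set of rows of the global table.
   Context: For a commutative ring $R$ with ring homomorphism $\alpha:R\to\mathbb{Z}$ and regular element $r$ (i.e. $\alpha(r)\ne0$ and $xr=\alpha(x)r$ for all $x$), the Knutson Index $\mathcal{K}_r(x)$ is the non-negative integer $m$ with $Rx\cap\mathbb{Z}r=m\mathbb{Z}r$. $\Omega(G)$ is the Burnside ring (Grothendieck ring of finite $G$-sets under disjoint union and Cartesian product), $\alpha(X)=|X|$, regular element $G/\{e\}$. $R(G,e)$ is the global representation ring: the Grothendieck ring of $G$-equivariant complex vector bundles on finite $G$-sets, with addition by disjoint union and product given by Cartesian product of bases with tensor product of fibres; it has $\mathbb{Z}$-basis the classes $(G/H_i,V)$ (the bundle on $G/H_i$ whose fibre at the identity coset is the irreducible $H_i$-representation $V$, taken up to $N_G(H_i)$-conjugation). Elements are detected by marks $(G/H,V)(K,k)=\sum_{gH\in(G/H)^K}\chi_V(g^{-1}kg)$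 for $K\le G$, $k\in K$, which are ring homomorphisms to $\mathbb{C}$. The dimension homomorphism on $R(G,e)$ is $x\mapsto x(\{e\},e)$, so $\alpha((G/H,V))=|G/H|\dim V$, and the regular element is $(G/\{e\},\mathbf 1)$, where $\mathbf 1$ is the (regular = trivial) representation of the trivial group. *)

theory Defs
  imports "HOL-Algebra.Coset" "Jordan_Normal_Form.Matrix"
begin

definition zspan :: "('i \<Rightarrow> 'a::comm_ring_1) set \<Rightarrow> ('i \<Rightarrow> 'a) set" where
  "zspan S = {(\<lambda>i. \<Sum>s\<in>F. of_int (c s) * s i) | F c. finite F \<and> F \<subseteq> S}"

definition knutson_index ::
  "('i \<Rightarrow> 'a::comm_ring_1) set \<Rightarrow> ('i \<Rightarrow> 'a) \<Rightarrow> ('i \<Rightarrow> 'a) \<Rightarrow> nat" where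
  "knutson_index R r x =
     (THE m::nat.
        {(\<lambda>i. y i * x i) | y. y \<in> R} \<inter> {(\<lambda>i. of_int n * r i) | n::int. True}
        = {(\<lambda>i. of_int (int m * k) * r i) | k::int. True})"

definition left_cosets :: "('g, 'b) monoid_scheme \<Rightarrow> 'g set \<Rightarrow> 'g set set" where
  "left_cosets G H = {g <#\<^bsub>G\<^esub> H | g. g \<in> carrier G}"

definition fixed_cosets :: "('g, 'b) monoid_scheme \<Rightarrow> 'g set \<Rightarrow> 'g set \<Rightarrow> 'g set set" where
  "fixed_cosets G H K = {C \<in> left_cosets G H. \<forall>k\<in>K. k <#\<^bsub>G\<^esub> C = C}"

definition burnside_mark :: "('g, 'b) monoid_scheme \<Rightarrow> 'g set \<Rightarrow> ('g set \<Rightarrow> int)" where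
  "burnside_mark G H = (\<lambda>K. if subgroup K G then int (card (fixed_cosets G H K)) else 0)"

definition burnside_ring :: "('g, 'b) monoid_scheme \<Rightarrow> ('g set \<Rightarrow> int) set" where
  "burnside_ring G = zspan {burnside_mark G H | H. subgroup H G}"

definition is_rep :: "('g, 'b) monoid_scheme \<Rightarrow> 'g set \<Rightarrow> nat \<Rightarrow> ('g \<Rightarrow> complex mat) \<Rightarrow> bool" where
  "is_rep G H d \<rho> \<longleftrightarrow>
     (\<forall>h\<in>H. \<rho> h \<in> carrier_mat d d) \<and>
     (\<forall>h1\<in>H. \<forall>h2\<in>H. \<rho> (h1 \<otimes>\<^bsub>G\<^esub> h2) = \<rho> h1 * \<rho> h2) \<and>
     \<rho> \<one>\<^bsub>G\<^esub> = 1\<^sub>m d"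

definition is_irrep :: "('g, 'b) monoid_scheme \<Rightarrow> 'g set \<Rightarrow> nat \<Rightarrow> ('g \<Rightarrow> complex mat) \<Rightarrow> bool" where
  "is_irrep G H d \<rho> \<longleftrightarrow> is_rep G H d \<rho> \<and> d > 0 \<and>
     (\<forall>W. W \<subseteq> carrier_vec d \<and> 0\<^sub>v d \<in> W \<and>
          (\<forall>v\<in>W. \<forall>w\<in>W. v + w \<in> W) \<and> (\<forall>a. \<forall>v\<in>W. a \<cdot>\<^sub>v v \<in> W) \<and>
          (\<forall>h\<in>H. \<forall>v\<in>W. \<rho> h *\<^sub>v v \<in> W)
        \<longrightarrow> W = {0\<^sub>v d} \<or> W = carrier_vec d)"

definition mat_trace :: "complex mat \<Rightarrow> complex" where
  "mat_trace A = (\<Sum>i<dim_row A. A $$ (i, i))"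

text \<open>(G/H,V)(K,k) = sum over gH in (G/H)^K of chi_V(g^-1 k g); the sum is
  independent of the representative g of the coset, we pick one with SOME.\<close>
definition global_mark ::
  "('g, 'b) monoid_scheme \<Rightarrow> 'g set \<Rightarrow> ('g \<Rightarrow> complex mat) \<Rightarrow> ('g set \<times> 'g \<Rightarrow> complex)" where
  "global_mark G H \<rho> = (\<lambda>(K, k). if subgroup K G \<and> k \<in> K then
      (\<Sum>C\<in>fixed_cosets G H K.
         let g = (SOME g. g \<in> C) in mat_trace (\<rho> (inv\<^bsub>G\<^esub> g \<otimes>\<^bsub>G\<^esub> k \<otimes>\<^bsub>G\<^esub> g)))
      else 0)"

definition global_ring :: "('g, 'b) monoid_scheme \<Rightarrow> ('g set \<times> 'g \<Rightarrow> complex) set" where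
  "global_ring G = zspan {global_mark G H \<rho> | H d \<rho>. subgroup H G \<and> is_irrep G H d \<rho>}"

text \<open>Trivial (= regular) representation of the trivial group.\<close>
definition triv_rep :: "'g \<Rightarrow> complex mat" where
  "triv_rep = (\<lambda>_. 1\<^sub>m 1)"

definition conjugate_subgroups :: "('g, 'b) monoid_scheme \<Rightarrow> 'g set \<Rightarrow> 'g set \<Rightarrow> bool" where
  "conjugate_subgroups G K H \<longleftrightarrow>
     (\<exists>g\<in>carrier G. K = (\<lambda>h. g \<otimes>\<^bsub>G\<^esub> h \<otimes>\<^bsub>G\<^esub> inv\<^bsub>G\<^esub> g) ` H)"

end

theory Submission
  imports Defs
begin

text \<open>Evaluating marks at the pairs (K, e) sends the global representation ring into the Burnside
  ring: the row of (G/H, V) becomes dim V times the row of G/H, and the regular element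
  (G/{e}, 1) becomes G/{e}. Hence every relation m (G/{e}, 1) = y (G/H, V) in R(G,e) yields a
  relation m G/{e} = (dim V y') G/H in the Burnside ring, so the Knutson index of G/H divides that of
  (G/H, V) for every V. Taking V trivial, each term of the left lcm divides a term of the right one.\<close>

lemma zspan_zero: "(\<lambda>i. 0) \<in> zspan S"
  unfolding zspan_def by (rule CollectI, rule exI[of _ "{}"]) auto

lemma zspan_base: "s \<in> S \<Longrightarrow> s \<in> zspan S"
  unfolding zspan_def by (intro CollectI exI[of _ "{s}"] exI[of _ "\<lambda>_. 1"]) auto

lemma zspan_add:
  assumes "y1 \<in> zspan S" "y2 \<in> zspan S"
  shows "(\<lambda>i. y1 i + y2 i) \<in> zspan S"
proof -
  obtain F1 c1 where F1: "finite F1" "F1 \<subseteq> S" "y1 = (\<lambda>i. \<Sum>s\<in>F1. of_int (c1 s) * s i)"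
    using assms(1) unfolding zspan_def by blast
  obtain F2 c2 where F2: "finite F2" "F2 \<subseteq> S" "y2 = (\<lambda>i. \<Sum>s\<in>F2. of_int (c2 s) * s i)"
    using assms(2) unfolding zspan_def by blast
  define c where "c s = (if s \<in> F1 then c1 s else 0) + (if s \<in> F2 then c2 s else 0)" for s
  have "(\<lambda>i. y1 i + y2 i) = (\<lambda>i. \<Sum>s\<in>F1 \<union> F2. of_int (c s) * s i)"
  proof
    fix i
    have "(\<Sum>s\<in>F1 \<union> F2. of_int (if s \<in> F1 then c1 s else 0) * s i) = y1 i"
      unfolding F1(3) by (rule sum.mono_neutral_cong_right) (use F1 F2 in auto)
    moreover have "(\<Sum>s\<in>F1 \<union> F2. of_int (if s \<in> F2 then c2 s else 0) * s i) = y2 i"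
      unfolding F2(3) by (rule sum.mono_neutral_cong_right) (use F1 F2 in auto)
    ultimately show "y1 i + y2 i = (\<Sum>s\<in>F1 \<union> F2. of_int (c s) * s i)"
      unfolding c_def of_int_add distrib_right sum.distrib by simp
  qed
  then show ?thesis unfolding zspan_def using F1 F2 by blast
qed

lemma zspan_of_int_mult:
  assumes "y \<in> zspan S"
  shows "(\<lambda>i. of_int k * y i) \<in> zspan S"
proof -
  obtain F c where F: "finite F" "F \<subseteq> S" "y = (\<lambda>i. \<Sum>s\<in>F. of_int (c s) * s i)"
    using assms unfolding zspan_def by blast
  have "(\<lambda>i. of_int k * y i) = (\<lambda>i. \<Sum>s\<in>F. of_int (k * c s) * s i)"
    unfolding F(3) sum_distrib_left by (simp add: mult.assoc)
  then show ?thesis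
    unfolding zspan_def using F(1,2) by (intro CollectI exI[of _ F] exI[of _ "\<lambda>s. k * c s"]) auto
qed

lemma zspan_sum:
  assumes "finite F" "\<And>s. s \<in> F \<Longrightarrow> t s \<in> zspan T"
  shows "(\<lambda>i. \<Sum>s\<in>F. of_int (c s) * t s i) \<in> zspan T"
  using assms
proof (induction F rule: finite_induct)
  case empty
  then show ?case using zspan_zero by simp
next
  case (insert a F)
  have "(\<lambda>i. of_int (c a) * t a i + (\<Sum>s\<in>F. of_int (c s) * t s i)) \<in> zspan T"
    by (rule zspan_add[OF zspan_of_int_mult]) (use insert in auto)
  then show ?case using insert by simp
qed

lemma zspan_restrict_of_int:
  fixes f :: "'i \<Rightarrow> 'j" and S :: "('j \<Rightarrow> 'a::comm_ring_1) set"
  assumes "y \<in> zspan S"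
    and "\<And>s. s \<in> S \<Longrightarrow> \<exists>t\<in>zspan T. \<forall>i. s (f i) = of_int (t i)"
  shows "\<exists>t\<in>zspan T. \<forall>i. y (f i) = of_int (t i)"
proof -
  obtain F c where F: "finite F" "F \<subseteq> S" "y = (\<lambda>j. \<Sum>s\<in>F. of_int (c s) * s j)"
    using assms(1) unfolding zspan_def by blast
  obtain t where t: "\<And>s. s \<in> F \<Longrightarrow> t s \<in> zspan T \<and> (\<forall>i. s (f i) = of_int (t s i))"
    using assms(2) F(2) by (metis subsetD)
  have "(\<lambda>i. \<Sum>s\<in>F. of_int (c s) * t s i) \<in> zspan T"
    using F(1) t by (intro zspan_sum) auto
  moreover have "y (f i) = of_int (\<Sum>s\<in>F. of_int (c s) * t s i)" for i
    unfolding F(3) using t by simp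
  ultimately show ?thesis by (intro bexI[of _ "\<lambda>i. \<Sum>s\<in>F. of_int (c s) * t s i"]) auto
qed

definition knutson_ideal ::
  "('i \<Rightarrow> 'a::comm_ring_1) set \<Rightarrow> ('i \<Rightarrow> 'a) \<Rightarrow> ('i \<Rightarrow> 'a) \<Rightarrow> int set" where
  "knutson_ideal R r x = {n. \<exists>y\<in>R. (\<lambda>i. of_int n * r i) = (\<lambda>i. y i * x i)}"

lemma int_ideal_eq_multiples:
  fixes I :: "int set"
  assumes "0 \<in> I" and add: "\<And>a b. a \<in> I \<Longrightarrow> b \<in> I \<Longrightarrow> a + b \<in> I"
    and mult: "\<And>a k. a \<in> I \<Longrightarrow> k * a \<in> I"
  shows "\<exists>m::nat. I = {int m * k | k. True}"
proof (cases "I \<subseteq> {0}")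
  case True
  then show ?thesis using assms(1) by (intro exI[of _ 0]) auto
next
  case False
  then obtain n where "n \<in> I" "n \<noteq> 0" by auto
  then have ex: "\<exists>m::nat. 0 < m \<and> int m \<in> I"
    using mult[of n "sgn n"] by (intro exI[of _ "nat \<bar>n\<bar>"]) (simp add: mult.commute flip: abs_sgn)
  define m where "m = (LEAST m::nat. 0 < m \<and> int m \<in> I)"
  have m: "0 < m" "int m \<in> I"
    using LeastI_ex[OF ex] unfolding m_def by auto
  have least: "m \<le> m'" if "0 < m'" "int m' \<in> I" for m'
    unfolding m_def by (rule Least_le) (use that in auto)
  have "x \<in> I \<longleftrightarrow> int m dvd x" for x
  proof
    assume x: "x \<in> I"
    have "x + (- (x div int m)) * int m \<in> I" by (rule add[OF x mult[OF m(2)]])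
    then have "x mod int m \<in> I" by (simp add: minus_div_mult_eq_mod)
    moreover have "0 \<le> x mod int m" "x mod int m < int m" using m(1) by simp_all
    ultimately have "x mod int m = 0"
      using least[of "nat (x mod int m)"] by fastforce
    then show "int m dvd x" by (simp add: dvd_eq_mod_eq_0)
  next
    assume "int m dvd x"
    then show "x \<in> I" using mult[OF m(2)] by (auto elim!: dvdE simp: mult.commute)
  qed
  then show ?thesis by (intro exI[of _ m]) (auto simp: dvd_def)
qed

lemma knutson_ideal_zspan_principal:
  "\<exists>m::nat. knutson_ideal (zspan S) r x = {int m * k | k. True}"
proof (rule int_ideal_eq_multiples)
  show "0 \<in> knutson_ideal (zspan S) r x"
    unfolding knutson_ideal_def using zspan_zero by force
next
  fix a b assume "a \<in> knutson_ideal (zspan S) r x" "b \<in> knutson_ideal (zspan S) r x"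
  then obtain ya yb where "ya \<in> zspan S" "yb \<in> zspan S"
    "(\<lambda>i. of_int a * r i) = (\<lambda>i. ya i * x i)" "(\<lambda>i. of_int b * r i) = (\<lambda>i. yb i * x i)"
    unfolding knutson_ideal_def by blast
  then show "a + b \<in> knutson_ideal (zspan S) r x"
    unfolding knutson_ideal_def
    by (intro CollectI bexI[of _ "\<lambda>i. ya i + yb i"] zspan_add) (auto simp: fun_eq_iff distrib_right)
next
  fix a k assume "a \<in> knutson_ideal (zspan S) r x"
  then obtain y where "y \<in> zspan S" "(\<lambda>i. of_int a * r i) = (\<lambda>i. y i * x i)"
    unfolding knutson_ideal_def by blast
  then show "k * a \<in> knutson_ideal (zspan S) r x"
    unfolding knutson_ideal_def
    by (intro CollectI bexI[OF _ zspan_of_int_mult[of y S k]]) (auto simp: fun_eq_iff mult.assoc)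
qed

lemma knutson_index_eqI:
  fixes r :: "'i \<Rightarrow> 'a::{idom,ring_char_0}"
  assumes "r \<noteq> (\<lambda>_. 0)" and ideal: "knutson_ideal R r x = {int m * k | k. True}"
  shows "knutson_index R r x = m"
proof -
  obtain j where "r j \<noteq> 0" using assms(1) by auto
  define M where "M c = {(\<lambda>i. of_int (int c * k) * r i) | k::int. True}" for c :: nat
  have mult_r_eq_iff: "(\<lambda>i. of_int a * r i) = (\<lambda>i. of_int b * r i) \<longleftrightarrow> a = b" for a b
    using \<open>r j \<noteq> 0\<close> by (auto dest: fun_cong[of _ _ j])
  have dvd_if_subset: "b dvd a" if "M a \<subseteq> M b" for a b
  proof -
    have "(\<lambda>i. of_int (int a * 1) * r i) \<in> M b" using that unfolding M_def by blast
    then obtain k where "(\<lambda>i. of_int (int a * 1) * r i) = (\<lambda>i. of_int (int b * k) * r i)"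
      unfolding M_def by blast
    then have "int a = int b * k" unfolding mult_r_eq_iff by simp
    then show ?thesis by (metis dvd_triv_left int_dvd_int_iff)
  qed
  have "{(\<lambda>i. y i * x i) | y. y \<in> R} \<inter> {(\<lambda>i. of_int n * r i) | n::int. True}
      = (\<lambda>n i. of_int n * r i) ` knutson_ideal R r x"
    unfolding knutson_ideal_def by auto
  also have "\<dots> = M m"
    unfolding ideal M_def by blast
  finally have set_eq: "{(\<lambda>i. y i * x i) | y. y \<in> R} \<inter> {(\<lambda>i. of_int n * r i) | n::int. True} = M m" .
  show ?thesis
    unfolding knutson_index_def M_def[symmetric]
  proof (rule the_equality)
    fix m' assume "{(\<lambda>i. y i * x i) | y. y \<in> R} \<inter> {(\<lambda>i. of_int n * r i) | n::int. True} = M m'"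
    then have "M m' = M m" using set_eq by simp
    then show "m' = m" using dvd_if_subset by (simp add: dvd_antisym)
  qed (fact set_eq)
qed

lemma knutson_ideal_zspan:
  fixes r :: "'i \<Rightarrow> 'a::{idom,ring_char_0}"
  assumes "r \<noteq> (\<lambda>_. 0)"
  shows "knutson_ideal (zspan S) r x = {int (knutson_index (zspan S) r x) * k | k. True}"
proof -
  obtain m where "knutson_ideal (zspan S) r x = {int m * k | k. True}"
    using knutson_ideal_zspan_principal by blast
  then show ?thesis using knutson_index_eqI[OF assms] by simp
qed

lemma knutson_index_in_knutson_ideal:
  fixes r :: "'i \<Rightarrow> 'a::{idom,ring_char_0}"
  assumes "r \<noteq> (\<lambda>_. 0)"
  shows "int (knutson_index (zspan S) r x) \<in> knutson_ideal (zspan S) r x"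
  unfolding knutson_ideal_zspan[OF assms] by (rule CollectI, rule exI[of _ 1]) simp

lemma knutson_index_dvd_knutson_ideal:
  fixes r :: "'i \<Rightarrow> 'a::{idom,ring_char_0}"
  assumes "r \<noteq> (\<lambda>_. 0)" and "n \<in> knutson_ideal (zspan S) r x"
  shows "int (knutson_index (zspan S) r x) dvd n"
  using assms(2) unfolding knutson_ideal_zspan[OF assms(1)] by auto

lemma some_in_left_coset_carrier:
  assumes "group G" "subgroup H G" "C \<in> left_cosets G H"
  shows "(SOME g. g \<in> C) \<in> carrier G"
proof -
  interpret group G by fact
  obtain g where g: "g \<in> carrier G" "C = g <#\<^bsub>G\<^esub> H"
    using assms(3) unfolding left_cosets_def by blast
  have "g \<in> C" unfolding g(2) l_coset_def using g(1) assms(2) subgroup.one_closed by fastforce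
  then have "(SOME g. g \<in> C) \<in> C" by (rule someI)
  then show ?thesis using l_coset_carrier[OF _ g(1) assms(2)] g(2) by blast
qed

lemma global_mark_at_one:
  assumes "group G" "subgroup H G" "is_rep G H d \<rho>"
  shows "global_mark G H \<rho> (K, \<one>\<^bsub>G\<^esub>) = of_int (int d * burnside_mark G H K)"
proof (cases "subgroup K G")
  case True
  interpret group G by fact
  have "mat_trace (\<rho> (inv\<^bsub>G\<^esub> (SOME g. g \<in> C) \<otimes>\<^bsub>G\<^esub> \<one>\<^bsub>G\<^esub> \<otimes>\<^bsub>G\<^esub> (SOME g. g \<in> C))) = of_nat d"
    if "C \<in> fixed_cosets G H K" for C
    using that some_in_left_coset_carrier[OF assms(1,2)] assms(3)
    by (simp add: fixed_cosets_def is_rep_def mat_trace_def)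
  then show ?thesis
    using True subgroup.one_closed[OF True] by (simp add: global_mark_def burnside_mark_def)
next
  case False
  then show ?thesis unfolding global_mark_def burnside_mark_def by simp
qed

lemma burnside_mark_regular_nonzero:
  assumes "group G" "finite (carrier G)"
  shows "burnside_mark G {\<one>\<^bsub>G\<^esub>} \<noteq> (\<lambda>_. 0)"
proof -
  interpret group G by fact
  have "left_cosets G {\<one>\<^bsub>G\<^esub>} = (\<lambda>g. g <#\<^bsub>G\<^esub> {\<one>\<^bsub>G\<^esub>}) ` carrier G"
    unfolding left_cosets_def by auto
  then have "finite (fixed_cosets G {\<one>\<^bsub>G\<^esub>} {\<one>\<^bsub>G\<^esub>})"
    using assms(2) unfolding fixed_cosets_def by simp
  moreover have "{\<one>\<^bsub>G\<^esub>} \<in> fixed_cosets G {\<one>\<^bsub>G\<^esub>} {\<one>\<^bsub>G\<^esub>}"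
    unfolding fixed_cosets_def left_cosets_def l_coset_def by force
  ultimately have "burnside_mark G {\<one>\<^bsub>G\<^esub>} {\<one>\<^bsub>G\<^esub>} \<noteq> 0"
    unfolding burnside_mark_def using triv_subgroup by auto
  then show ?thesis by (auto simp: fun_eq_iff)
qed

lemma is_rep_triv_rep: "is_rep G H 1 triv_rep"
  unfolding is_rep_def triv_rep_def by simp

lemma global_mark_regular_at_one:
  assumes "group G"
  shows "global_mark G {\<one>\<^bsub>G\<^esub>} triv_rep (K, \<one>\<^bsub>G\<^esub>) = of_int (burnside_mark G {\<one>\<^bsub>G\<^esub>} K)"
  using global_mark_at_one[OF assms group.triv_subgroup[OF assms] is_rep_triv_rep] by simp

lemma is_irrep_if_dim_one:
  assumes "is_rep G H 1 \<rho>"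
  shows "is_irrep G H 1 \<rho>"
  unfolding is_irrep_def
proof (intro conjI allI impI)
  fix W :: "complex vec set"
  assume W: "W \<subseteq> carrier_vec 1 \<and> 0\<^sub>v 1 \<in> W \<and> (\<forall>v\<in>W. \<forall>w\<in>W. v + w \<in> W) \<and>
       (\<forall>a. \<forall>v\<in>W. a \<cdot>\<^sub>v v \<in> W) \<and> (\<forall>h\<in>H. \<forall>v\<in>W. \<rho> h *\<^sub>v v \<in> W)"
  show "W = {0\<^sub>v 1} \<or> W = carrier_vec 1"
  proof (cases "W \<subseteq> {0\<^sub>v 1}")
    case True
    then show ?thesis using W by blast
  next
    case False
    then obtain v where v: "v \<in> W" "v \<noteq> 0\<^sub>v 1" by blast
    then have v_dim: "v \<in> carrier_vec 1" using W by blast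
    have v0: "v $ 0 \<noteq> 0"
    proof
      assume "v $ 0 = 0"
      then have "v = 0\<^sub>v 1" using v_dim by (intro eq_vecI) auto
      then show False using v(2) by contradiction
    qed
    have "carrier_vec 1 \<subseteq> W"
    proof
      fix w :: "complex vec" assume w: "w \<in> carrier_vec 1"
      have "w = (w $ 0 / v $ 0) \<cdot>\<^sub>v v" using w v_dim v0 by (intro eq_vecI) auto
      then show "w \<in> W" using W v(1) by metis
    qed
    then show ?thesis using W by blast
  qed
qed (use assms in simp_all)

lemma global_ring_restrict_one:
  assumes "group G" "y \<in> global_ring G"
  shows "\<exists>y'\<in>burnside_ring G. \<forall>K. y (K, \<one>\<^bsub>G\<^esub>) = of_int (y' K)"
  using assms(2) unfolding global_ring_def burnside_ring_def
proof (rule zspan_restrict_of_int)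
  fix s assume "s \<in> {global_mark G H \<rho> | H d \<rho>. subgroup H G \<and> is_irrep G H d \<rho>}"
  then obtain H d \<rho> where s: "s = global_mark G H \<rho>" "subgroup H G" "is_irrep G H d \<rho>"
    by blast
  have "burnside_mark G H \<in> zspan {burnside_mark G H | H. subgroup H G}"
    using s(2) by (intro zspan_base) blast
  from zspan_of_int_mult[OF this, of "int d"]
  have "(\<lambda>K. int d * burnside_mark G H K) \<in> zspan {burnside_mark G H | H. subgroup H G}"
    by simp
  moreover have "s (K, \<one>\<^bsub>G\<^esub>) = of_int (int d * burnside_mark G H K)" for K
    using global_mark_at_one[OF assms(1) s(2)] s(3) unfolding s(1) is_irrep_def by simp
  ultimately show "\<exists>t\<in>zspan {burnside_mark G H | H. subgroup H G}. \<forall>K. s (K, \<one>\<^bsub>G\<^esub>) = of_int (t K)"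
    by (intro bexI[of _ "\<lambda>K. int d * burnside_mark G H K"]) auto
qed

lemma knutson_ideal_global_subset_burnside:
  assumes G: "group G" and H: "subgroup H G" and irr: "is_irrep G H d \<rho>"
  shows "knutson_ideal (global_ring G) (global_mark G {\<one>\<^bsub>G\<^esub>} triv_rep) (global_mark G H \<rho>)
    \<subseteq> knutson_ideal (burnside_ring G) (burnside_mark G {\<one>\<^bsub>G\<^esub>}) (burnside_mark G H)"
proof
  fix n
  assume "n \<in> knutson_ideal (global_ring G) (global_mark G {\<one>\<^bsub>G\<^esub>} triv_rep) (global_mark G H \<rho>)"
  then obtain y where "y \<in> global_ring G" and rel:
    "(\<lambda>i. of_int n * global_mark G {\<one>\<^bsub>G\<^esub>} triv_rep i) = (\<lambda>i. y i * global_mark G H \<rho> i)"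
    unfolding knutson_ideal_def by blast
  then obtain y' where y': "y' \<in> burnside_ring G" "\<forall>K. y (K, \<one>\<^bsub>G\<^esub>) = of_int (y' K)"
    using global_ring_restrict_one[OF G] by blast
  have x_at_one: "global_mark G H \<rho> (K, \<one>\<^bsub>G\<^esub>) = of_int (int d * burnside_mark G H K)" for K
    using global_mark_at_one[OF G H] irr unfolding is_irrep_def by simp
  have "n * burnside_mark G {\<one>\<^bsub>G\<^esub>} K = (int d * y' K) * burnside_mark G H K" for K
  proof -
    have "(of_int (n * burnside_mark G {\<one>\<^bsub>G\<^esub>} K) :: complex)
        = of_int ((int d * y' K) * burnside_mark G H K)"
      using fun_cong[OF rel, of "(K, \<one>\<^bsub>G\<^esub>)"] y'(2)
      by (simp add: global_mark_regular_at_one[OF G] x_at_one algebra_simps)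
    then show ?thesis by (rule of_int_eq_iff[THEN iffD1])
  qed
  moreover have "(\<lambda>K. int d * y' K) \<in> burnside_ring G"
    using zspan_of_int_mult[of y' _ "int d"] y'(1) unfolding burnside_ring_def by simp
  ultimately show "n \<in> knutson_ideal (burnside_ring G) (burnside_mark G {\<one>\<^bsub>G\<^esub>}) (burnside_mark G H)"
    unfolding knutson_ideal_def by (auto intro!: bexI[of _ "\<lambda>K. int d * y' K"])
qed

lemma knutson_index_burnside_dvd_global:
  assumes G: "group G" "finite (carrier G)" and H: "subgroup H G" and irr: "is_irrep G H d \<rho>"
  shows "knutson_index (burnside_ring G) (burnside_mark G {\<one>\<^bsub>G\<^esub>}) (burnside_mark G H)
     dvd knutson_index (global_ring G) (global_mark G {\<one>\<^bsub>G\<^esub>} triv_rep) (global_mark G H \<rho>)"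
    (is "?mO dvd ?mR")
proof -
  note reg_nonzero = burnside_mark_regular_nonzero[OF G]
  then obtain K where "burnside_mark G {\<one>\<^bsub>G\<^esub>} K \<noteq> 0" by auto
  then have "global_mark G {\<one>\<^bsub>G\<^esub>} triv_rep (K, \<one>\<^bsub>G\<^esub>) \<noteq> 0"
    by (simp add: global_mark_regular_at_one[OF G(1)])
  then have "global_mark G {\<one>\<^bsub>G\<^esub>} triv_rep \<noteq> (\<lambda>_. 0)" by auto
  then have "int ?mR \<in> knutson_ideal (global_ring G) (global_mark G {\<one>\<^bsub>G\<^esub>} triv_rep) (global_mark G H \<rho>)"
    unfolding global_ring_def by (rule knutson_index_in_knutson_ideal)
  then have "int ?mR \<in> knutson_ideal (burnside_ring G) (burnside_mark G {\<one>\<^bsub>G\<^esub>}) (burnside_mark G H)"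
    using knutson_ideal_global_subset_burnside[OF G(1) H irr] by blast
  then have "int ?mO dvd int ?mR"
    unfolding burnside_ring_def by (rule knutson_index_dvd_knutson_ideal[OF reg_nonzero])
  then show ?thesis by simp
qed

theorem lemma4p4:
  fixes G :: "('g, 'b) monoid_scheme" and Hs :: "'g set set"
  assumes "group G" and "finite (carrier G)"
    and "\<forall>H\<in>Hs. subgroup H G"
    and "\<forall>K. subgroup K G \<longrightarrow> (\<exists>!H. H \<in> Hs \<and> conjugate_subgroups G K H)"
  shows "Lcm {knutson_index (burnside_ring G) (burnside_mark G {\<one>\<^bsub>G\<^esub>}) (burnside_mark G H)
              | H. H \<in> Hs}
         dvd
         Lcm {knutson_index (global_ring G) (global_mark G {\<one>\<^bsub>G\<^esub>} triv_rep) (global_mark G H \<rho>)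
              | H d \<rho>. H \<in> Hs \<and> is_irrep G H d \<rho>}"
proof -
  have triv_irrep: "is_irrep G H 1 triv_rep" for H
    by (rule is_irrep_if_dim_one[OF is_rep_triv_rep])
  have index_dvd: "knutson_index (burnside_ring G) (burnside_mark G {\<one>\<^bsub>G\<^esub>}) (burnside_mark G H)
     dvd knutson_index (global_ring G) (global_mark G {\<one>\<^bsub>G\<^esub>} triv_rep) (global_mark G H triv_rep)"
    if "H \<in> Hs" for H
    using knutson_index_burnside_dvd_global[OF assms(1,2) _ triv_irrep] that assms(3) by blast
  show ?thesis
    by (intro Lcm_least) (blast intro: dvd_trans[OF index_dvd dvd_Lcm] triv_irrep)
qed

end
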